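(* Suppose one of the following two settings holds. (A) $H\subset\mathbb R^n$ is a bounded, open, mildly regular set, $m\ge1$, $\mathcal B$ is a finite index set, for each $\beta\in\mathcal B$ $b_\beta\in C^m(\bar H)$ with $b_\beta(x)>0$ for all $x\in\bar H$, and $\theta_\beta:H\to H$ is a $C^m$ map whose components lie in $C^m(\bar H)$; and for some norm $\|\cdot\|$ on $\mathbb R^n$ there exist an integer $\mu\ge1$ and $\kappa<1$ such that $\|\theta_\omega(x)-\theta_\omega(y)\|\le\kappa\|x-y\|$ for all $\omega\in\mathcal B_\mu$ and $x,y\in H$. Let $\Lambda:C^m(\bar H)\to C^m(\bar H)$ be $(\Lambda f)(x)=\sum_{\beta\in\mathcal B}b_\beta(x)f(\theta_\beta(x))$; it has a unique (up to positive multiples) strictly positive eigenvector $v$, whose eigenvalue is $r(\Lambda)$. (B) $H\subset\mathbb R^n$ is bounded open with metric from a norm, $\mathcal B$ is countably infinite, $\theta_\beta:\bar H\to\bar H$ and $b_\beta:\bar H\to(0,\infty)$ are continuous, the families $\{\theta_\beta\}$, $\{b_\beta\}$, $\{\log b_\beta\}$ are uniformly Lipschitz, $\sum_\beta b_\beta(x)<\infty$ for all $x$ with continuous sum, and $\mathrm{Lip}(\theta_\omega)\le\kappa<1$ for all $\omega\in\mathcal B_\mu$ for some $\mu\ge1$. Let $\Lambda:C(\bar H)\to C(\bar H)$ be given by the same formula; it has a unique (up to positive multiples) strictly positive eigenvector $v$, with eigenvalue $r(\Lambda)$. Assume that $\pi:\bar H\to\bar H$ is a $C^m$ map, $m\ge1$,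 with $\pi(\pi(x))=x$ for all $x\in\bar H$, and that there is a one-to-one map $\beta\mapsto\bar\beta$ of $\mathcal B$ onto $\mathcal B$ such that $\pi(\theta_{\bar\beta}(x))=\theta_\beta(\pi(x))$ and $b_\beta(\pi(x))=b_{\bar\beta}(x)$ for all $\beta\in\mathcal B$ and all $x\in\bar H$. Then $v(\pi(x))=v(x)$ for all $x\in\bar H$.
   Context: $H$ is mildly regular if there exist $\eta>0$ and $M\ge1$ such that whenever $x,y\in H$ and $\|x-y\|<\eta$ there is a Lipschitz map $\psi:[0,1]\to H$ with $\psi(0)=x$, $\psi(1)=y$ and $\int_0^1\|\psi'(t)\|\,dt\le M\|x-y\|$. $C^m(\bar H)$ is the Banach space of real $C^m$ functions on $H$ all of whose partial derivatives of order $\le m$ extend continuously to $\bar H$. $\mathcal B_\mu=\{(j_1,\ldots,j_\mu):j_k\in\mathcal B\}$ and $\theta_\omega=\theta_{j_\mu}\circ\cdots\circ\theta_{j_1}$. Uniformly Lipschitz means one Lipschitz constant for the whole family. $r(\cdot)$ is the spectral radius. *)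

theory Defs
  imports "HOL-Analysis.Analysis"
begin

fun pd :: "'n::finite list \<Rightarrow> (real^'n \<Rightarrow> real) \<Rightarrow> (real^'n \<Rightarrow> real)" where
  "pd [] f = f"
| "pd (i # is) f = (\<lambda>x. frechet_derivative (pd is f) (at x) (axis i 1))"

(* C^m(closure H): C^m on the open set H, all partial derivatives of order \<le> m
   extend continuously to closure H; the function itself is considered on closure H *)
definition Cm :: "nat \<Rightarrow> (real^'n::finite) set \<Rightarrow> (real^'n \<Rightarrow> real) set" where
  "Cm m H = {f. continuous_on (closure H) f \<and>
     (\<forall>is. length is \<le> m \<longrightarrow>
        (length is < m \<longrightarrow> (\<forall>x\<in>H. pd is f differentiable (at x))) \<and>
        (\<exists>F. continuous_on (closure H) F \<and> (\<forall>x\<in>H. F x = pd is f x)))}"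

definition C0 :: "(real^'n::finite) set \<Rightarrow> (real^'n \<Rightarrow> real) set" where
  "C0 H = {f. continuous_on (closure H) f}"

definition is_norm :: "(real^'n::finite \<Rightarrow> real) \<Rightarrow> bool" where
  "is_norm N \<longleftrightarrow> (\<forall>x. N x \<ge> 0) \<and> (\<forall>x. N x = 0 \<longleftrightarrow> x = 0) \<and>
     (\<forall>c x. N (c *\<^sub>R x) = \<bar>c\<bar> * N x) \<and> (\<forall>x y. N (x + y) \<le> N x + N y)"

definition mildly_regular :: "(real^'n::finite) set \<Rightarrow> bool" where
  "mildly_regular H \<longleftrightarrow> (\<exists>\<eta>>0. \<exists>M\<ge>1. \<forall>x\<in>H. \<forall>y\<in>H. norm (x - y) < \<eta> \<longrightarrow>
     (\<exists>\<psi> L D N. L-lipschitz_on {0..1::real} \<psi> \<and> \<psi> ` {0..1} \<subseteq> H \<and> \<psi> 0 = x \<and> \<psi> 1 = y \<and>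
        negligible N \<and>
        (\<forall>t\<in>{0..1} - N. (\<psi> has_vector_derivative D t) (at t within {0..1})) \<and>
        (\<lambda>t. norm (D t)) integrable_on {0..1} \<and>
        integral {0..1} (\<lambda>t. norm (D t)) \<le> M * norm (x - y)))"

(* theta_omega = theta_{j_mu} o ... o theta_{j_1} for omega = [j_1,...,j_mu] *)
fun theta_word :: "('b \<Rightarrow> 'a \<Rightarrow> 'a) \<Rightarrow> 'b list \<Rightarrow> 'a \<Rightarrow> 'a" where
  "theta_word \<theta> [] = id"
| "theta_word \<theta> (j # js) = theta_word \<theta> js \<circ> \<theta> j"

definition words :: "'b set \<Rightarrow> nat \<Rightarrow> 'b list set" where
  "words B \<mu> = {\<omega>. length \<omega> = \<mu> \<and> set \<omega> \<subseteq> B}"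

definition Lam :: "'b set \<Rightarrow> ('b \<Rightarrow> 'a \<Rightarrow> real) \<Rightarrow> ('b \<Rightarrow> 'a \<Rightarrow> 'a) \<Rightarrow> ('a \<Rightarrow> real) \<Rightarrow> 'a \<Rightarrow> real" where
  "Lam B b \<theta> f x = (\<Sum>\<^sub>\<infinity>\<beta>\<in>B. b \<beta> x * f (\<theta> \<beta> x))"

definition settingA :: "nat \<Rightarrow> (real^'n::finite) set \<Rightarrow> 'b set \<Rightarrow> ('b \<Rightarrow> real^'n \<Rightarrow> real)
    \<Rightarrow> ('b \<Rightarrow> real^'n \<Rightarrow> real^'n) \<Rightarrow> bool" where
  "settingA m H B b \<theta> \<longleftrightarrow> bounded H \<and> open H \<and> mildly_regular H \<and> m \<ge> 1 \<and> finite B \<and>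
     (\<forall>\<beta>\<in>B. b \<beta> \<in> Cm m H \<and> (\<forall>x\<in>closure H. b \<beta> x > 0) \<and>
        \<theta> \<beta> ` H \<subseteq> H \<and> (\<forall>i. (\<lambda>x. \<theta> \<beta> x $ i) \<in> Cm m H)) \<and>
     (\<exists>N \<mu> \<kappa>. is_norm N \<and> \<mu> \<ge> 1 \<and> \<kappa> < 1 \<and>
        (\<forall>\<omega>\<in>words B \<mu>. \<forall>x\<in>H. \<forall>y\<in>H.
           N (theta_word \<theta> \<omega> x - theta_word \<theta> \<omega> y) \<le> \<kappa> * N (x - y)))"

definition settingB :: "(real^'n::finite) set \<Rightarrow> 'b set \<Rightarrow> ('b \<Rightarrow> real^'n \<Rightarrow> real)
    \<Rightarrow> ('b \<Rightarrow> real^'n \<Rightarrow> real^'n) \<Rightarrow> bool" where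
  "settingB H B b \<theta> \<longleftrightarrow> bounded H \<and> open H \<and> infinite B \<and> countable B \<and>
     (\<forall>\<beta>\<in>B. continuous_on (closure H) (\<theta> \<beta>) \<and> \<theta> \<beta> ` closure H \<subseteq> closure H \<and>
        continuous_on (closure H) (b \<beta>) \<and> (\<forall>x\<in>closure H. b \<beta> x > 0)) \<and>
     (\<forall>x\<in>closure H. (\<lambda>\<beta>. b \<beta> x) summable_on B) \<and>
     continuous_on (closure H) (\<lambda>x. \<Sum>\<^sub>\<infinity>\<beta>\<in>B. b \<beta> x) \<and>
     (\<exists>N. is_norm N \<and>
        (\<exists>L. \<forall>\<beta>\<in>B. \<forall>x\<in>closure H. \<forall>y\<in>closure H.
            N (\<theta> \<beta> x - \<theta> \<beta> y) \<le> L * N (x - y) \<and>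
            \<bar>b \<beta> x - b \<beta> y\<bar> \<le> L * N (x - y) \<and>
            \<bar>ln (b \<beta> x) - ln (b \<beta> y)\<bar> \<le> L * N (x - y)) \<and>
        (\<exists>\<mu> \<kappa>. \<mu> \<ge> 1 \<and> \<kappa> < 1 \<and>
           (\<forall>\<omega>\<in>words B \<mu>. \<forall>x\<in>closure H. \<forall>y\<in>closure H.
              N (theta_word \<theta> \<omega> x - theta_word \<theta> \<omega> y) \<le> \<kappa> * N (x - y))))"

definition pos_eigvec :: "(real^'n::finite) set \<Rightarrow> (real^'n \<Rightarrow> real) set \<Rightarrow> 'b set
    \<Rightarrow> ('b \<Rightarrow> real^'n \<Rightarrow> real) \<Rightarrow> ('b \<Rightarrow> real^'n \<Rightarrow> real^'n) \<Rightarrow> (real^'n \<Rightarrow> real) \<Rightarrow> bool" where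
  "pos_eigvec H X B b \<theta> w \<longleftrightarrow> w \<in> X \<and> (\<forall>x\<in>closure H. w x > 0) \<and>
     (\<exists>ev. \<forall>x\<in>closure H. Lam B b \<theta> w x = ev * w x)"

definition unique_pos_eigvec :: "(real^'n::finite) set \<Rightarrow> (real^'n \<Rightarrow> real) set \<Rightarrow> 'b set
    \<Rightarrow> ('b \<Rightarrow> real^'n \<Rightarrow> real) \<Rightarrow> ('b \<Rightarrow> real^'n \<Rightarrow> real^'n) \<Rightarrow> (real^'n \<Rightarrow> real) \<Rightarrow> bool" where
  "unique_pos_eigvec H X B b \<theta> v \<longleftrightarrow> pos_eigvec H X B b \<theta> v \<and>
     (\<forall>w. pos_eigvec H X B b \<theta> w \<longrightarrow> (\<exists>c>0. \<forall>x\<in>closure H. w x = c * v x))"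

end

theory Submission
  imports Defs
begin

text \<open>
  Both \<open>v\<close> and \<open>w = v \<circ> \<pi>\<close> are continuous strictly positive eigenvectors of \<open>\<Lambda>\<close> for the
  same eigenvalue, because the symmetry \<open>bar\<close> lets one reindex the sum defining \<open>\<Lambda>\<close>.
  Hence \<open>w = c v\<close> with \<open>c > 0\<close>: in setting (B) by the assumed uniqueness in \<open>C(closure H)\<close>;
  in setting (A), where \<open>w\<close> need not lie in \<open>C\<^sup>m(closure H)\<close>, by a direct argument. With
  \<open>c\<close> the maximum of \<open>w / v\<close>, the function \<open>u = c v - w \<ge> 0\<close> is an eigenvector vanishing at
  some point \<open>z\<close>; positivity of the weights makes \<open>u\<close> vanish along the whole orbit
  \<open>\<theta>\<^sub>\<omega>(z)\<close>, and since the maps \<open>\<theta>\<^sub>\<omega>\<close> shrink \<open>closure H\<close> uniformly as \<open>\<omega>\<close> grows,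
  the identity \<open>\<lambda>\<^sup>k u(x) = (\<Sum>\<omega>. b\<^sub>\<omega>(x) u(\<theta>\<^sub>\<omega>(x)))\<close> forces \<open>u = 0\<close>. Finally \<open>\<pi>\<close> is
  an involution, so \<open>v = c\<^sup>2 v\<close> and \<open>c = 1\<close>.
\<close>

section \<open>Norms on \<open>\<real>\<^sup>n\<close>\<close>

lemma is_norm_zero: "is_norm N \<Longrightarrow> N 0 = 0"
  unfolding is_norm_def by auto

lemma is_norm_nonneg: "is_norm N \<Longrightarrow> N x \<ge> 0"
  unfolding is_norm_def by auto

lemma is_norm_triangle: "is_norm N \<Longrightarrow> N (x + y) \<le> N x + N y"
  unfolding is_norm_def by auto

lemma is_norm_diff_commute: "is_norm N \<Longrightarrow> N (x - y) = N (y - x)"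
  unfolding is_norm_def by (metis abs_minus_cancel abs_one minus_diff_eq mult_1 scaleR_minus1_left)

lemma is_norm_sum: "is_norm N \<Longrightarrow> N (sum f A) \<le> (\<Sum>i\<in>A. N (f i))"
proof (induction A rule: infinite_finite_induct)
  case (insert x F)
  then show ?case using is_norm_triangle[OF insert(4), of "f x" "sum f F"] by simp
qed (simp_all add: is_norm_zero)

lemma is_norm_le_norm:
  fixes N :: "real^'n::finite \<Rightarrow> real"
  assumes "is_norm N"
  shows "N x \<le> (\<Sum>i\<in>UNIV. N (axis i 1)) * norm x"
proof -
  have "x = (\<Sum>i\<in>UNIV. x$i *\<^sub>R axis i 1)"
    by (simp add: vec_eq_iff sum_component axis_def if_distrib cong: if_cong)
  then have "N x \<le> (\<Sum>i\<in>UNIV. N (x$i *\<^sub>R axis i 1))"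
    by (metis is_norm_sum[OF assms])
  also have "\<dots> = (\<Sum>i\<in>UNIV. \<bar>x$i\<bar> * N (axis i 1))"
    using assms unfolding is_norm_def by simp
  also have "\<dots> \<le> (\<Sum>i\<in>UNIV. norm x * N (axis i 1))"
    by (rule sum_mono) (simp add: component_le_norm_cart is_norm_nonneg[OF assms] mult_right_mono)
  finally show ?thesis
    by (simp add: sum_distrib_left mult.commute)
qed

lemma continuous_on_is_norm:
  fixes N :: "real^'n::finite \<Rightarrow> real"
  assumes "is_norm N"
  shows "continuous_on S N"
proof -
  define C where "C = (\<Sum>i\<in>UNIV. N (axis i 1)) + 1"
  have "C > 0"
    unfolding C_def using is_norm_nonneg[OF assms] by (simp add: add_nonneg_pos sum_nonneg)
  moreover have "\<bar>N x - N y\<bar> \<le> C * norm (x - y)" for x y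
  proof -
    have "N x \<le> N (x - y) + N y" "N y \<le> N (x - y) + N x"
      using is_norm_triangle[OF assms, of "x - y" y] is_norm_triangle[OF assms, of "y - x" x]
        is_norm_diff_commute[OF assms, of x y] by simp_all
    moreover have "N (x - y) \<le> C * norm (x - y)"
      using is_norm_le_norm[OF assms, of "x - y"] norm_ge_zero[of "x - y"]
      unfolding C_def distrib_right by linarith
    ultimately show ?thesis by linarith
  qed
  ultimately have "C-lipschitz_on S N"
    by (simp add: lipschitz_on_def dist_norm dist_real_def)
  then show ?thesis
    using lipschitz_on_continuous_on by blast
qed

lemma norm_le_is_norm:
  fixes N :: "real^'n::finite \<Rightarrow> real"
  assumes "is_norm N"
  obtains c where "c > 0" "\<And>x. norm x \<le> c * N x"
proof -
  have "continuous_on (sphere 0 1) N"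
    by (rule continuous_on_is_norm[OF assms])
  then obtain z where z: "z \<in> sphere 0 1" "\<forall>y\<in>sphere 0 1. N z \<le> N y"
    using continuous_attains_inf[of "sphere (0::real^'n) 1" N] by auto
  have "N z > 0"
    using z assms unfolding is_norm_def by (metis less_eq_real_def norm_zero mem_sphere_0 zero_neq_one)
  moreover have "norm x \<le> 1 / N z * N x" for x
  proof (cases "x = 0")
    case False
    have "N z \<le> N ((1 / norm x) *\<^sub>R x)"
      using z(2) False by simp
    also have "\<dots> = N x / norm x"
      using assms False unfolding is_norm_def by simp
    finally show ?thesis
      using \<open>N z > 0\<close> False by (simp add: field_simps)
  qed (simp add: is_norm_zero[OF assms])
  ultimately show ?thesis
    using that[of "1 / N z"] by simp
qed

lemma is_norm_lipschitz_closure: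
  fixes H :: "(real^'n::finite) set"
  assumes N: "is_norm N" and g: "continuous_on (closure H) g"
    and ineq: "\<forall>x\<in>H. \<forall>y\<in>H. N (g x - g y) \<le> \<kappa> * N (x - y)"
    and "x \<in> closure H" "y \<in> closure H"
  shows "N (g x - g y) \<le> \<kappa> * N (x - y)"
proof -
  let ?f = "\<lambda>p. \<kappa> * N (fst p - snd p) - N (g (fst p) - g (snd p))"
  have "continuous_on (closure H \<times> closure H) (\<lambda>p. g (fst p))"
    "continuous_on (closure H \<times> closure H) (\<lambda>p. g (snd p))"
    by (auto intro!: continuous_on_compose2[OF g] continuous_intros)
  then have "continuous_on (closure (H \<times> H)) ?f"
    unfolding closure_Times
    by (auto intro!: continuous_intros continuous_on_compose2[OF continuous_on_is_norm[OF N]])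
  moreover have "(x, y) \<in> closure (H \<times> H)"
    using assms by (simp add: closure_Times)
  ultimately have "?f (x, y) \<ge> 0"
    by (rule continuous_ge_on_closure) (use ineq in auto)
  then show ?thesis by simp
qed

section \<open>Words, weights and iterates of \<open>\<Lambda>\<close>\<close>

fun word_weight :: "('b \<Rightarrow> 'a \<Rightarrow> real) \<Rightarrow> ('b \<Rightarrow> 'a \<Rightarrow> 'a) \<Rightarrow> 'b list \<Rightarrow> 'a \<Rightarrow> real" where
  "word_weight b \<theta> [] x = 1"
| "word_weight b \<theta> (j # js) x = b j x * word_weight b \<theta> js (\<theta> j x)"

lemma words_0: "words B 0 = {[]}"
  unfolding words_def by auto

lemma words_Suc: "words B (Suc k) = (\<lambda>(j, w). j # w) ` (B \<times> words B k)"
  unfolding words_def by (auto simp: image_iff length_Suc_conv)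

lemma finite_words: "finite B \<Longrightarrow> finite (words B k)"
  unfolding words_def using finite_lists_length_eq by (simp add: conj_commute)

lemma theta_word_append: "theta_word \<theta> (xs @ ys) = theta_word \<theta> ys \<circ> theta_word \<theta> xs"
  by (induction xs) auto

lemma theta_word_in:
  "\<forall>\<beta>\<in>B. \<theta> \<beta> ` K \<subseteq> K \<Longrightarrow> set \<omega> \<subseteq> B \<Longrightarrow> x \<in> K \<Longrightarrow> theta_word \<theta> \<omega> x \<in> K"
  by (induction \<omega> arbitrary: x) auto

lemma continuous_on_theta_word:
  assumes "\<forall>\<beta>\<in>B. continuous_on K (\<theta> \<beta>)" "\<forall>\<beta>\<in>B. \<theta> \<beta> ` K \<subseteq> K" "set \<omega> \<subseteq> B"
  shows "continuous_on K (theta_word \<theta> \<omega>)"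
  using assms(3)
proof (induction \<omega>)
  case (Cons j js)
  then have "continuous_on K (\<lambda>x. theta_word \<theta> js (\<theta> j x))"
    using assms(1,2) by (intro continuous_on_compose2[of K "theta_word \<theta> js" K "\<theta> j"]) auto
  then show ?case
    by (simp add: comp_def)
qed (simp add: continuous_on_id)

lemma word_weight_pos:
  "\<forall>\<beta>\<in>B. \<theta> \<beta> ` K \<subseteq> K \<Longrightarrow> \<forall>\<beta>\<in>B. \<forall>x\<in>K. b \<beta> x > 0 \<Longrightarrow> set \<omega> \<subseteq> B \<Longrightarrow> x \<in> K \<Longrightarrow>
    word_weight b \<theta> \<omega> x > 0"
proof (induction \<omega> arbitrary: x)
  case (Cons j \<omega>)
  then have "\<theta> j x \<in> K" by auto
  with Cons show ?case by simp
qed simp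

lemma Lam_finite: "finite B \<Longrightarrow> Lam B b \<theta> f x = (\<Sum>\<beta>\<in>B. b \<beta> x * f (\<theta> \<beta> x))"
  unfolding Lam_def by simp

lemma Lam_power_eigvec:
  assumes fin: "finite B" and K: "\<forall>\<beta>\<in>B. \<theta> \<beta> ` K \<subseteq> K"
    and eig: "\<forall>x\<in>K. Lam B b \<theta> f x = lam * f x" and "x \<in> K"
  shows "lam ^ k * f x = (\<Sum>\<omega>\<in>words B k. word_weight b \<theta> \<omega> x * f (theta_word \<theta> \<omega> x))"
  using \<open>x \<in> K\<close>
proof (induction k arbitrary: x)
  case 0
  then show ?case by (simp add: words_0)
next
  case (Suc k)
  have "inj_on (\<lambda>(j, w). j # w) (B \<times> words B k)"
    by (auto simp: inj_on_def)
  then have "(\<Sum>\<omega>\<in>words B (Suc k). word_weight b \<theta> \<omega> x * f (theta_word \<theta> \<omega> x))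
      = (\<Sum>(j, w)\<in>B \<times> words B k. b j x * (word_weight b \<theta> w (\<theta> j x) * f (theta_word \<theta> w (\<theta> j x))))"
    unfolding words_Suc by (subst sum.reindex) (simp_all add: case_prod_unfold mult.assoc)
  also have "\<dots> = (\<Sum>j\<in>B. b j x * (\<Sum>w\<in>words B k. word_weight b \<theta> w (\<theta> j x) * f (theta_word \<theta> w (\<theta> j x))))"
    by (simp add: sum.cartesian_product[symmetric] sum_distrib_left)
  also have "\<dots> = (\<Sum>j\<in>B. b j x * (lam ^ k * f (\<theta> j x)))"
    using K Suc by (intro sum.cong) (auto simp: image_subset_iff)
  also have "\<dots> = lam ^ k * (lam * f x)"
    using eig Suc.prems fin
    by (simp add: Lam_finite sum_distrib_left[symmetric] mult.left_commute)
  finally show ?case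
    by (simp add: mult.assoc)
qed

lemma theta_word_contraction_power:
  assumes N: "is_norm N" and K: "\<forall>\<beta>\<in>B. \<theta> \<beta> ` K \<subseteq> K"
    and contr: "\<forall>\<omega>\<in>words B \<mu>. \<forall>x\<in>K. \<forall>y\<in>K.
      N (theta_word \<theta> \<omega> x - theta_word \<theta> \<omega> y) \<le> \<kappa> * N (x - y)"
    and "\<omega> \<in> words B (k * \<mu>)" "x \<in> K" "y \<in> K"
  shows "N (theta_word \<theta> \<omega> x - theta_word \<theta> \<omega> y) \<le> (max \<kappa> 0) ^ k * N (x - y)"
  using assms(4-)
proof (induction k arbitrary: \<omega> x y)
  case 0
  then show ?case by (simp add: words_def)
next
  case (Suc k)
  let ?\<omega>\<^sub>1 = "take \<mu> \<omega>" and ?\<omega>\<^sub>2 = "drop \<mu> \<omega>"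
  have \<omega>\<^sub>1: "?\<omega>\<^sub>1 \<in> words B \<mu>" and \<omega>\<^sub>2: "?\<omega>\<^sub>2 \<in> words B (k * \<mu>)"
    using Suc.prems(1) set_take_subset[of \<mu> \<omega>] set_drop_subset[of \<mu> \<omega>]
    unfolding words_def by auto
  have "theta_word \<theta> ?\<omega>\<^sub>1 x \<in> K" "theta_word \<theta> ?\<omega>\<^sub>1 y \<in> K"
    using theta_word_in[OF K] \<omega>\<^sub>1 Suc.prems(2,3) unfolding words_def by blast+
  then have "N (theta_word \<theta> \<omega> x - theta_word \<theta> \<omega> y)
      \<le> (max \<kappa> 0) ^ k * N (theta_word \<theta> ?\<omega>\<^sub>1 x - theta_word \<theta> ?\<omega>\<^sub>1 y)"
    using Suc.IH[OF \<omega>\<^sub>2] theta_word_append[of \<theta> ?\<omega>\<^sub>1 ?\<omega>\<^sub>2] by simp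
  also have "\<dots> \<le> (max \<kappa> 0) ^ k * (max \<kappa> 0 * N (x - y))"
  proof (rule mult_left_mono)
    have "N (theta_word \<theta> ?\<omega>\<^sub>1 x - theta_word \<theta> ?\<omega>\<^sub>1 y) \<le> \<kappa> * N (x - y)"
      using contr \<omega>\<^sub>1 Suc.prems(2,3) by blast
    also have "\<dots> \<le> max \<kappa> 0 * N (x - y)"
      by (rule mult_right_mono) (auto simp: is_norm_nonneg[OF N])
    finally show "N (theta_word \<theta> ?\<omega>\<^sub>1 x - theta_word \<theta> ?\<omega>\<^sub>1 y) \<le> max \<kappa> 0 * N (x - y)" .
  qed simp
  finally show ?case
    by (simp only: power_Suc2 mult.assoc)
qed

lemma theta_word_shrinking:
  fixes K :: "(real^'n::finite) set"
  assumes N: "is_norm N" and \<kappa>: "\<kappa> < 1" and "bounded K" and K: "\<forall>\<beta>\<in>B. \<theta> \<beta> ` K \<subseteq> K"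
    and contr: "\<forall>\<omega>\<in>words B \<mu>. \<forall>x\<in>K. \<forall>y\<in>K.
      N (theta_word \<theta> \<omega> x - theta_word \<theta> \<omega> y) \<le> \<kappa> * N (x - y)"
    and "\<delta> > 0"
  obtains j where "\<forall>\<omega>\<in>words B j. \<forall>x\<in>K. \<forall>y\<in>K. dist (theta_word \<theta> \<omega> x) (theta_word \<theta> \<omega> y) < \<delta>"
proof -
  obtain c where c: "c > 0" "\<And>x. norm x \<le> c * N x"
    using norm_le_is_norm[OF N] by blast
  obtain D where D: "\<forall>x\<in>K. \<forall>y\<in>K. dist x y \<le> D"
    using \<open>bounded K\<close> bounded_two_points by blast
  define C where "C = (\<Sum>i\<in>UNIV. N (axis i 1))"
  have "C \<ge> 0"
    unfolding C_def using is_norm_nonneg[OF N] by (simp add: sum_nonneg)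
  have diam: "N (x - y) \<le> C * D" if "x \<in> K" "y \<in> K" for x y
    using is_norm_le_norm[OF N, of "x - y"] mult_left_mono[OF D[rule_format, OF that] \<open>C \<ge> 0\<close>]
    unfolding C_def dist_norm by linarith
  have "(\<lambda>k. c * (C * D) * (max \<kappa> 0) ^ k) \<longlonglongrightarrow> 0"
    using \<kappa> by (intro tendsto_mult_right_zero LIMSEQ_power_zero) auto
  then have "eventually (\<lambda>k. c * (C * D) * (max \<kappa> 0) ^ k < \<delta>) sequentially"
    using \<open>\<delta> > 0\<close> by (rule order_tendstoD(2))
  then obtain k where k: "c * (C * D) * (max \<kappa> 0) ^ k < \<delta>"
    by (auto simp: eventually_sequentially)
  have "dist (theta_word \<theta> \<omega> x) (theta_word \<theta> \<omega> y) < \<delta>"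
    if "\<omega> \<in> words B (k * \<mu>)" "x \<in> K" "y \<in> K" for \<omega> x y
  proof -
    have "dist (theta_word \<theta> \<omega> x) (theta_word \<theta> \<omega> y) \<le> c * N (theta_word \<theta> \<omega> x - theta_word \<theta> \<omega> y)"
      using c(2) by (simp add: dist_norm)
    also have "\<dots> \<le> c * ((max \<kappa> 0) ^ k * N (x - y))"
      using theta_word_contraction_power[OF N K contr that] c(1) by simp
    also have "\<dots> \<le> c * ((max \<kappa> 0) ^ k * (C * D))"
      by (intro mult_left_mono diam[OF that(2,3)]) (use c(1) in auto)
    also have "\<dots> < \<delta>"
      using k by (simp add: mult_ac)
    finally show ?thesis .
  qed
  then show ?thesis
    using that by blast
qed

section \<open>Uniqueness of continuous positive eigenvectors\<close>

lemma eigvec_vanishes_on_orbit: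
  assumes fin: "finite B" and K: "\<forall>\<beta>\<in>B. \<theta> \<beta> ` K \<subseteq> K" and bpos: "\<forall>\<beta>\<in>B. \<forall>x\<in>K. b \<beta> x > 0"
    and unn: "\<forall>x\<in>K. u x \<ge> 0" and ueig: "\<forall>x\<in>K. Lam B b \<theta> u x = lam * u x"
    and "z \<in> K" "u z = 0" and \<omega>: "\<omega> \<in> words B k"
  shows "u (theta_word \<theta> \<omega> z) = 0"
proof -
  have terms_nonneg: "word_weight b \<theta> \<omega>' z * u (theta_word \<theta> \<omega>' z) \<ge> 0"
    if "\<omega>' \<in> words B k" for \<omega>'
  proof -
    have "set \<omega>' \<subseteq> B"
      using that unfolding words_def by blast
    then have "word_weight b \<theta> \<omega>' z > 0" "u (theta_word \<theta> \<omega>' z) \<ge> 0"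
      using word_weight_pos[OF K bpos] theta_word_in[OF K] unn \<open>z \<in> K\<close> by auto
    then show ?thesis
      by simp
  qed
  have "(\<Sum>\<omega>\<in>words B k. word_weight b \<theta> \<omega> z * u (theta_word \<theta> \<omega> z)) = 0"
    using Lam_power_eigvec[OF fin K ueig \<open>z \<in> K\<close>, of k] \<open>u z = 0\<close> by simp
  then have "word_weight b \<theta> \<omega> z * u (theta_word \<theta> \<omega> z) = 0"
    using \<omega> by (simp add: sum_nonneg_eq_0_iff[OF finite_words[OF fin] terms_nonneg])
  moreover have "word_weight b \<theta> \<omega> z > 0"
    using word_weight_pos[OF K bpos] \<omega> \<open>z \<in> K\<close> unfolding words_def by blast
  ultimately show ?thesis by simp
qed

lemma eigval_pos:
  assumes fin: "finite B" and "B \<noteq> {}" and K: "\<forall>\<beta>\<in>B. \<theta> \<beta> ` K \<subseteq> K"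
    and bpos: "\<forall>\<beta>\<in>B. \<forall>x\<in>K. b \<beta> x > 0"
    and vpos: "\<forall>x\<in>K. v x > 0" and veig: "\<forall>x\<in>K. Lam B b \<theta> v x = lam * v x" and "z \<in> K"
  shows "lam > 0"
proof -
  have "0 < (\<Sum>\<beta>\<in>B. b \<beta> z * v (\<theta> \<beta> z))"
    using bpos vpos K \<open>z \<in> K\<close> by (intro sum_pos[OF fin \<open>B \<noteq> {}\<close>] mult_pos_pos) (auto simp: image_subset_iff)
  then have "lam * v z > 0"
    using veig \<open>z \<in> K\<close> by (simp add: Lam_finite[OF fin])
  then show "lam > 0"
    using vpos \<open>z \<in> K\<close> zero_less_mult_pos2 by blast
qed

lemma eigvec_le_by_word_images:
  assumes fin: "finite B" and K: "\<forall>\<beta>\<in>B. \<theta> \<beta> ` K \<subseteq> K" and bpos: "\<forall>\<beta>\<in>B. \<forall>x\<in>K. b \<beta> x > 0"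
    and "lam > 0" and "vmin > 0" and vmin: "\<forall>y\<in>K. vmin \<le> v y"
    and veig: "\<forall>x\<in>K. Lam B b \<theta> v x = lam * v x" and ueig: "\<forall>x\<in>K. Lam B b \<theta> u x = lam * u x"
    and "x \<in> K" and "e \<ge> 0" and small: "\<forall>\<omega>\<in>words B j. u (theta_word \<theta> \<omega> x) \<le> e"
  shows "u x \<le> e / vmin * v x"
proof -
  have term_le: "word_weight b \<theta> \<omega> x * u (theta_word \<theta> \<omega> x)
      \<le> e / vmin * (word_weight b \<theta> \<omega> x * v (theta_word \<theta> \<omega> x))"
    if \<omega>: "\<omega> \<in> words B j" for \<omega>
  proof -
    have "theta_word \<theta> \<omega> x \<in> K" and "word_weight b \<theta> \<omega> x > 0"
      using theta_word_in[OF K] word_weight_pos[OF K bpos] \<omega> \<open>x \<in> K\<close> unfolding words_def by blast+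
    have "u (theta_word \<theta> \<omega> x) \<le> e"
      using small \<omega> by blast
    also have "\<dots> \<le> e / vmin * v (theta_word \<theta> \<omega> x)"
      using mult_left_mono[OF vmin[rule_format, OF \<open>theta_word \<theta> \<omega> x \<in> K\<close>] \<open>e \<ge> 0\<close>] \<open>vmin > 0\<close>
      by (simp add: field_simps)
    finally have "u (theta_word \<theta> \<omega> x) \<le> e / vmin * v (theta_word \<theta> \<omega> x)" .
    then have "word_weight b \<theta> \<omega> x * u (theta_word \<theta> \<omega> x)
        \<le> word_weight b \<theta> \<omega> x * (e / vmin * v (theta_word \<theta> \<omega> x))"
      using \<open>word_weight b \<theta> \<omega> x > 0\<close> by (intro mult_left_mono) auto
    then show ?thesis
      by (simp add: mult_ac)
  qed
  have "lam ^ j * u x = (\<Sum>\<omega>\<in>words B j. word_weight b \<theta> \<omega> x * u (theta_word \<theta> \<omega> x))"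
    using Lam_power_eigvec[OF fin K ueig \<open>x \<in> K\<close>] .
  also have "\<dots> \<le> e / vmin * (\<Sum>\<omega>\<in>words B j. word_weight b \<theta> \<omega> x * v (theta_word \<theta> \<omega> x))"
    unfolding sum_distrib_left by (rule sum_mono) (use term_le in blast)
  also have "\<dots> = lam ^ j * (e / vmin * v x)"
    using Lam_power_eigvec[OF fin K veig \<open>x \<in> K\<close>] by simp
  finally show ?thesis
    by (rule mult_left_le_imp_le) (use \<open>lam > 0\<close> in simp)
qed

lemma nonneg_eigvec_zero_at_point:
  fixes K :: "(real^'n::finite) set"
  assumes fin: "finite B" and "B \<noteq> {}" and "compact K" and K: "\<forall>\<beta>\<in>B. \<theta> \<beta> ` K \<subseteq> K"
    and bpos: "\<forall>\<beta>\<in>B. \<forall>x\<in>K. b \<beta> x > 0"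
    and N: "is_norm N" and \<kappa>: "\<kappa> < 1"
    and contr: "\<forall>\<omega>\<in>words B \<mu>. \<forall>x\<in>K. \<forall>y\<in>K.
      N (theta_word \<theta> \<omega> x - theta_word \<theta> \<omega> y) \<le> \<kappa> * N (x - y)"
    and vc: "continuous_on K v" and vpos: "\<forall>x\<in>K. v x > 0"
    and veig: "\<forall>x\<in>K. Lam B b \<theta> v x = lam * v x"
    and uc: "continuous_on K u" and unn: "\<forall>x\<in>K. u x \<ge> 0"
    and ueig: "\<forall>x\<in>K. Lam B b \<theta> u x = lam * u x"
    and "z \<in> K" "u z = 0"
  shows "\<forall>x\<in>K. u x = 0"
proof
  fix x assume "x \<in> K"
  have "lam > 0"
    by (rule eigval_pos[OF fin \<open>B \<noteq> {}\<close> K bpos vpos veig \<open>z \<in> K\<close>])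
  obtain vmin where "vmin > 0" and vmin: "\<forall>y\<in>K. vmin \<le> v y"
    using continuous_attains_inf[OF \<open>compact K\<close> _ vc] \<open>z \<in> K\<close> vpos by fastforce
  have u_le: "u x \<le> e / vmin * v x" if "e > 0" for e
  proof -
    obtain \<delta> where "\<delta> > 0" and \<delta>: "\<forall>y\<in>K. \<forall>y'\<in>K. dist y' y < \<delta> \<longrightarrow> dist (u y') (u y) < e"
      using compact_uniformly_continuous[OF uc \<open>compact K\<close>] \<open>e > 0\<close>
      unfolding uniformly_continuous_on_def by blast
    obtain j where j: "\<forall>\<omega>\<in>words B j. \<forall>y\<in>K. \<forall>y'\<in>K.
        dist (theta_word \<theta> \<omega> y) (theta_word \<theta> \<omega> y') < \<delta>"
      using theta_word_shrinking[OF N \<kappa> compact_imp_bounded[OF \<open>compact K\<close>] K contr \<open>\<delta> > 0\<close>] .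
    \<comment> \<open>each \<open>\<theta>\<^sub>\<omega>(x)\<close> is \<open>\<delta>\<close>-close to the point \<open>\<theta>\<^sub>\<omega>(z)\<close> of the orbit, where \<open>u\<close> vanishes\<close>
    have "u (theta_word \<theta> \<omega> x) \<le> e" if \<omega>: "\<omega> \<in> words B j" for \<omega>
    proof -
      have "theta_word \<theta> \<omega> x \<in> K" "theta_word \<theta> \<omega> z \<in> K"
        using theta_word_in[OF K] \<omega> \<open>x \<in> K\<close> \<open>z \<in> K\<close> unfolding words_def by blast+
      moreover have "dist (theta_word \<theta> \<omega> x) (theta_word \<theta> \<omega> z) < \<delta>"
        using j \<omega> \<open>x \<in> K\<close> \<open>z \<in> K\<close> by blast
      ultimately have "dist (u (theta_word \<theta> \<omega> x)) (u (theta_word \<theta> \<omega> z)) < e"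
        using \<delta> by blast
      then show ?thesis
        using eigvec_vanishes_on_orbit[OF fin K bpos unn ueig \<open>z \<in> K\<close> \<open>u z = 0\<close> \<omega>]
        by (simp add: dist_real_def)
    qed
    then show ?thesis
      by (intro eigvec_le_by_word_images[OF fin K bpos \<open>lam > 0\<close> \<open>vmin > 0\<close> vmin veig ueig \<open>x \<in> K\<close>])
        (use \<open>e > 0\<close> in auto)
  qed
  have "u x \<le> 0 + e" if "e > 0" for e
  proof -
    have "v x > 0"
      using vpos \<open>x \<in> K\<close> by blast
    have "u x \<le> (e * vmin / v x) / vmin * v x"
      using \<open>e > 0\<close> \<open>vmin > 0\<close> \<open>v x > 0\<close> by (intro u_le divide_pos_pos mult_pos_pos)
    also have "\<dots> = e"
      using \<open>v x > 0\<close> \<open>vmin > 0\<close> by simp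
    finally show ?thesis by simp
  qed
  then have "u x \<le> 0"
    by (rule field_le_epsilon)
  then show "u x = 0"
    using unn \<open>x \<in> K\<close> by force
qed

lemma continuous_pos_eigvecs_proportional:
  fixes K :: "(real^'n::finite) set"
  assumes fin: "finite B" and "B \<noteq> {}" and "compact K" and K: "\<forall>\<beta>\<in>B. \<theta> \<beta> ` K \<subseteq> K"
    and bpos: "\<forall>\<beta>\<in>B. \<forall>x\<in>K. b \<beta> x > 0"
    and N: "is_norm N" and \<kappa>: "\<kappa> < 1"
    and contr: "\<forall>\<omega>\<in>words B \<mu>. \<forall>x\<in>K. \<forall>y\<in>K.
      N (theta_word \<theta> \<omega> x - theta_word \<theta> \<omega> y) \<le> \<kappa> * N (x - y)"
    and vc: "continuous_on K v" and vpos: "\<forall>x\<in>K. v x > 0"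
    and veig: "\<forall>x\<in>K. Lam B b \<theta> v x = lam * v x"
    and wc: "continuous_on K w" and wpos: "\<forall>x\<in>K. w x > 0"
    and weig: "\<forall>x\<in>K. Lam B b \<theta> w x = lam * w x"
  shows "\<exists>c>0. \<forall>x\<in>K. w x = c * v x"
proof (cases "K = {}")
  case False
  have "continuous_on K (\<lambda>x. w x / v x)"
    using vpos by (intro continuous_intros wc vc) auto
  then obtain z where "z \<in> K" and z: "\<forall>y\<in>K. w y / v y \<le> w z / v z"
    using continuous_attains_sup[OF \<open>compact K\<close> False] by blast
  define c where "c = w z / v z"
  define u where "u = (\<lambda>x. c * v x - w x)"
  have "\<forall>x\<in>K. u x = 0"
  proof (rule nonneg_eigvec_zero_at_point[OF fin \<open>B \<noteq> {}\<close> \<open>compact K\<close> K bpos N \<kappa> contr vc vpos veig])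
    show "continuous_on K u"
      unfolding u_def by (intro continuous_intros vc wc)
    show "\<forall>x\<in>K. u x \<ge> 0"
      using z vpos unfolding u_def c_def by (simp add: divide_le_eq)
    show "\<forall>x\<in>K. Lam B b \<theta> u x = lam * u x"
    proof
      fix x assume "x \<in> K"
      have "Lam B b \<theta> u x = c * Lam B b \<theta> v x - Lam B b \<theta> w x"
        by (simp add: Lam_finite[OF fin] u_def sum_subtractf sum_distrib_left right_diff_distrib
            mult.left_commute)
      then show "Lam B b \<theta> u x = lam * u x"
        using veig weig \<open>x \<in> K\<close> by (simp add: u_def algebra_simps)
    qed
    have "v z \<noteq> 0"
      using vpos \<open>z \<in> K\<close> by force
    then show "u z = 0"
      unfolding u_def c_def by simp
  qed (fact \<open>z \<in> K\<close>)
  moreover have "c > 0"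
    unfolding c_def using wpos vpos \<open>z \<in> K\<close> by simp
  ultimately show ?thesis
    unfolding u_def by force
qed (rule exI[of _ 1]; simp)

section \<open>Setting (A)\<close>

lemma continuous_on_Cm: "f \<in> Cm m H \<Longrightarrow> continuous_on (closure H) f"
  unfolding Cm_def by blast

lemma continuous_on_Cm_components:
  fixes f :: "real^'n::finite \<Rightarrow> real^'m::finite"
  assumes "\<forall>i. (\<lambda>x. f x $ i) \<in> Cm m H"
  shows "continuous_on (closure H) f"
proof -
  have "continuous_on (closure H) (\<lambda>x. \<chi> i. f x $ i)"
    using assms by (intro continuous_on_vec_lambda continuous_on_Cm) blast
  then show ?thesis by simp
qed

lemma pd_const: "\<exists>c'. pd is (\<lambda>_. c) = (\<lambda>_. c')"
proof (induction "is")
  case (Cons i "is")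
  then obtain c' where "pd is (\<lambda>_. c) = (\<lambda>_. c')" by blast
  then have "pd (i # is) (\<lambda>_. c) = (\<lambda>_. 0)"
    using frechet_derivative_at[OF has_derivative_const] by simp
  then show ?case by blast
qed auto

lemma const_in_Cm: "(\<lambda>_. c) \<in> Cm m H"
proof -
  have "pd is (\<lambda>_. c) differentiable at x \<and>
      (\<exists>F. continuous_on (closure H) F \<and> (\<forall>x\<in>H. F x = pd is (\<lambda>_. c) x))" for "is" x
  proof -
    obtain c' where "pd is (\<lambda>_. c) = (\<lambda>_. c')"
      using pd_const by blast
    then show ?thesis
      by (auto intro!: exI[of _ "\<lambda>_. c'"])
  qed
  then show ?thesis
    unfolding Cm_def by auto
qed

lemma unique_pos_eigvec_Cm_empty_const:
  assumes "unique_pos_eigvec H (Cm m H) {} b \<theta> v"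
  obtains c where "\<forall>x\<in>closure H. v x = c"
proof -
  have "pos_eigvec H (Cm m H) {} b \<theta> (\<lambda>_. 1)"
    unfolding pos_eigvec_def using const_in_Cm by (auto simp: Lam_def)
  then obtain c where "c > 0" "\<forall>x\<in>closure H. 1 = c * v x"
    using assms unfolding unique_pos_eigvec_def by blast
  then have "\<forall>x\<in>closure H. v x = 1 / c"
    by (simp add: field_simps)
  then show ?thesis using that by blast
qed

lemma settingA_pos_eigvecs_proportional:
  assumes A: "settingA m H B b \<theta>" and "B \<noteq> {}"
    and vc: "continuous_on (closure H) v" and vpos: "\<forall>x\<in>closure H. v x > 0"
    and veig: "\<forall>x\<in>closure H. Lam B b \<theta> v x = lam * v x"
    and wc: "continuous_on (closure H) w" and wpos: "\<forall>x\<in>closure H. w x > 0"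
    and weig: "\<forall>x\<in>closure H. Lam B b \<theta> w x = lam * w x"
  shows "\<exists>c>0. \<forall>x\<in>closure H. w x = c * v x"
proof -
  obtain N \<mu> \<kappa> where "bounded H" and fin: "finite B"
    and B_props: "\<forall>\<beta>\<in>B. b \<beta> \<in> Cm m H \<and> (\<forall>x\<in>closure H. b \<beta> x > 0) \<and> \<theta> \<beta> ` H \<subseteq> H \<and>
      (\<forall>i. (\<lambda>x. \<theta> \<beta> x $ i) \<in> Cm m H)"
    and N: "is_norm N" and \<kappa>: "\<kappa> < 1"
    and contr: "\<forall>\<omega>\<in>words B \<mu>. \<forall>x\<in>H. \<forall>y\<in>H.
      N (theta_word \<theta> \<omega> x - theta_word \<theta> \<omega> y) \<le> \<kappa> * N (x - y)"
    using A unfolding settingA_def by (elim conjE exE) (rule that; assumption)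
  have "compact (closure H)"
    using \<open>bounded H\<close> by (simp add: compact_closure)
  have bpos: "\<forall>\<beta>\<in>B. \<forall>x\<in>closure H. b \<beta> x > 0"
    using B_props by blast
  have \<theta>c: "\<forall>\<beta>\<in>B. continuous_on (closure H) (\<theta> \<beta>)"
    using B_props by (blast intro: continuous_on_Cm_components)
  have K: "\<forall>\<beta>\<in>B. \<theta> \<beta> ` closure H \<subseteq> closure H"
  proof
    fix \<beta> assume "\<beta> \<in> B"
    then have "\<theta> \<beta> ` H \<subseteq> closure H"
      using B_props closure_subset by blast
    then show "\<theta> \<beta> ` closure H \<subseteq> closure H"
      using image_closure_subset[OF _ closed_closure] \<theta>c \<open>\<beta> \<in> B\<close> by blast
  qed
  have contr_closure: "\<forall>\<omega>\<in>words B \<mu>. \<forall>x\<in>closure H. \<forall>y\<in>closure H.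
      N (theta_word \<theta> \<omega> x - theta_word \<theta> \<omega> y) \<le> \<kappa> * N (x - y)"
  proof (intro ballI)
    fix \<omega> x y assume \<omega>: "\<omega> \<in> words B \<mu>" and "x \<in> closure H" "y \<in> closure H"
    have "continuous_on (closure H) (theta_word \<theta> \<omega>)"
      using continuous_on_theta_word[OF \<theta>c K] \<omega> unfolding words_def by blast
    then show "N (theta_word \<theta> \<omega> x - theta_word \<theta> \<omega> y) \<le> \<kappa> * N (x - y)"
      using contr \<omega> \<open>x \<in> closure H\<close> \<open>y \<in> closure H\<close> by (blast intro: is_norm_lipschitz_closure[OF N])
  qed
  show ?thesis
    by (rule continuous_pos_eigvecs_proportional[OF fin \<open>B \<noteq> {}\<close> \<open>compact (closure H)\<close> K bpos N \<kappa>
          contr_closure vc vpos veig wc wpos weig])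
qed

lemma settingA_unique_pos_eigvec_pullback:
  assumes A: "settingA m H B b \<theta>" and U: "unique_pos_eigvec H (Cm m H) B b \<theta> v"
    and maps: "\<pi> ` closure H \<subseteq> closure H"
    and veig: "\<forall>x\<in>closure H. Lam B b \<theta> v x = lam * v x"
    and wc: "continuous_on (closure H) (v \<circ> \<pi>)"
    and weig: "\<forall>x\<in>closure H. Lam B b \<theta> (v \<circ> \<pi>) x = lam * (v \<circ> \<pi>) x"
  shows "\<exists>c>0. \<forall>x\<in>closure H. v (\<pi> x) = c * v x"
proof (cases "B = {}")
  case True
  then obtain c where "\<forall>x\<in>closure H. v x = c"
    using unique_pos_eigvec_Cm_empty_const U by blast
  then show ?thesis
    using maps by (intro exI[of _ 1]) auto
next
  case False
  have vc: "continuous_on (closure H) v" and vpos: "\<forall>x\<in>closure H. v x > 0"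
    using U unfolding unique_pos_eigvec_def pos_eigvec_def by (auto dest: continuous_on_Cm)
  moreover have "\<forall>x\<in>closure H. (v \<circ> \<pi>) x > 0"
    using vpos maps by auto
  ultimately show ?thesis
    using settingA_pos_eigvecs_proportional[OF A False vc vpos veig wc _ weig] by simp
qed

section \<open>The symmetry\<close>

lemma Lam_comp_symmetric_eigvec:
  assumes "bij_betw bar B B" and maps: "\<pi> ` K \<subseteq> K"
    and theta_sym: "\<forall>\<beta>\<in>B. \<forall>x\<in>K. \<pi> (\<theta> (bar \<beta>) x) = \<theta> \<beta> (\<pi> x)"
    and b_sym: "\<forall>\<beta>\<in>B. \<forall>x\<in>K. b \<beta> (\<pi> x) = b (bar \<beta>) x"
    and veig: "\<forall>x\<in>K. Lam B b \<theta> v x = lam * v x"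
  shows "\<forall>x\<in>K. Lam B b \<theta> (v \<circ> \<pi>) x = lam * (v \<circ> \<pi>) x"
proof
  fix x assume "x \<in> K"
  have "inj_on bar B" and "bar ` B = B"
    using assms(1) unfolding bij_betw_def by auto
  have "Lam B b \<theta> (v \<circ> \<pi>) x = (\<Sum>\<^sub>\<infinity>\<beta>\<in>bar ` B. b \<beta> x * v (\<pi> (\<theta> \<beta> x)))"
    unfolding Lam_def \<open>bar ` B = B\<close> by simp
  also have "\<dots> = (\<Sum>\<^sub>\<infinity>\<beta>\<in>B. b (bar \<beta>) x * v (\<pi> (\<theta> (bar \<beta>) x)))"
    using infsum_reindex[OF \<open>inj_on bar B\<close>] by (simp add: comp_def)
  also have "\<dots> = Lam B b \<theta> v (\<pi> x)"
    unfolding Lam_def using theta_sym b_sym \<open>x \<in> K\<close> by (intro infsum_cong) simp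
  also have "\<dots> = lam * (v \<circ> \<pi>) x"
    using veig maps \<open>x \<in> K\<close> by auto
  finally show "Lam B b \<theta> (v \<circ> \<pi>) x = lam * (v \<circ> \<pi>) x" .
qed

lemma involution_proportional_eq:
  fixes v :: "'a \<Rightarrow> real"
  assumes "\<forall>x\<in>K. \<pi> x \<in> K" "\<forall>x\<in>K. \<pi> (\<pi> x) = x" "\<forall>x\<in>K. v x > 0"
    and "c > 0" and proportional: "\<forall>x\<in>K. v (\<pi> x) = c * v x"
  shows "\<forall>x\<in>K. v (\<pi> x) = v x"
proof
  fix x assume "x \<in> K"
  have "v x = v (\<pi> (\<pi> x))"
    using assms(2) \<open>x \<in> K\<close> by simp
  also have "\<dots> = c * v (\<pi> x)"
    using proportional assms(1) \<open>x \<in> K\<close> by blast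
  also have "\<dots> = c\<^sup>2 * v x"
    using proportional \<open>x \<in> K\<close> by (simp add: power2_eq_square)
  finally have "(c\<^sup>2 - 1) * v x = 0"
    by (simp add: algebra_simps)
  moreover have "v x \<noteq> 0"
    using assms(3) \<open>x \<in> K\<close> by force
  ultimately have "c\<^sup>2 = 1"
    by simp
  then have "c = 1"
    using \<open>c > 0\<close> by (simp add: power2_eq_1_iff)
  then show "v (\<pi> x) = v x"
    using proportional \<open>x \<in> K\<close> by simp
qed

theorem corollary5p6:
  fixes H :: "(real^'n::finite) set" and B :: "'b set" and m :: nat
    and b :: "'b \<Rightarrow> real^'n \<Rightarrow> real" and \<theta> :: "'b \<Rightarrow> real^'n \<Rightarrow> real^'n"
    and v :: "real^'n \<Rightarrow> real" and \<pi> :: "real^'n \<Rightarrow> real^'n" and bar :: "'b \<Rightarrow> 'b"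
  assumes setting: "(settingA m H B b \<theta> \<and> unique_pos_eigvec H (Cm m H) B b \<theta> v) \<or>
                    (settingB H B b \<theta> \<and> unique_pos_eigvec H (C0 H) B b \<theta> v)"
    and m: "m \<ge> 1"
    and pi_maps: "\<pi> ` closure H \<subseteq> closure H"
    and pi_Cm: "\<forall>i. (\<lambda>x. \<pi> x $ i) \<in> Cm m H"
    and pi_inv: "\<forall>x\<in>closure H. \<pi> (\<pi> x) = x"
    and bar_bij: "bij_betw bar B B"
    and theta_sym: "\<forall>\<beta>\<in>B. \<forall>x\<in>closure H. \<pi> (\<theta> (bar \<beta>) x) = \<theta> \<beta> (\<pi> x)"
    and b_sym: "\<forall>\<beta>\<in>B. \<forall>x\<in>closure H. b \<beta> (\<pi> x) = b (bar \<beta>) x"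
  shows "\<forall>x\<in>closure H. v (\<pi> x) = v x"
proof -
  have v: "pos_eigvec H (Cm m H) B b \<theta> v \<or> pos_eigvec H (C0 H) B b \<theta> v"
    using setting unfolding unique_pos_eigvec_def by blast
  then obtain lam where veig: "\<forall>x\<in>closure H. Lam B b \<theta> v x = lam * v x"
    unfolding pos_eigvec_def by blast
  have vc: "continuous_on (closure H) v" and vpos: "\<forall>x\<in>closure H. v x > 0"
    using v unfolding pos_eigvec_def C0_def by (auto dest: continuous_on_Cm)
  have wc: "continuous_on (closure H) (v \<circ> \<pi>)"
    unfolding comp_def by (rule continuous_on_compose2[OF vc continuous_on_Cm_components[OF pi_Cm] pi_maps])
  have weig: "\<forall>x\<in>closure H. Lam B b \<theta> (v \<circ> \<pi>) x = lam * (v \<circ> \<pi>) x"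
    by (rule Lam_comp_symmetric_eigvec[OF bar_bij pi_maps theta_sym b_sym veig])
  have "\<exists>c>0. \<forall>x\<in>closure H. v (\<pi> x) = c * v x"
    using setting
  proof (elim disjE conjE)
    assume "settingA m H B b \<theta>" "unique_pos_eigvec H (Cm m H) B b \<theta> v"
    then show ?thesis
      by (rule settingA_unique_pos_eigvec_pullback[OF _ _ pi_maps veig wc weig])
  next
    assume "unique_pos_eigvec H (C0 H) B b \<theta> v"
    moreover have "pos_eigvec H (C0 H) B b \<theta> (v \<circ> \<pi>)"
      unfolding pos_eigvec_def C0_def using wc vpos pi_maps weig by auto
    ultimately obtain c where "c > 0" "\<forall>x\<in>closure H. (v \<circ> \<pi>) x = c * v x"
      unfolding unique_pos_eigvec_def by blast
    then show ?thesis
      by auto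
  qed
  then show ?thesis
    using involution_proportional_eq[OF _ pi_inv vpos] pi_maps by blast
qed

end
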